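(* Let $n\ge7$ and let $\mathcal{W}\subset(\mathbb{R}^{4n})^{\otimes5}$ be the set defined below, with $E=\{1,\dots,2n\}$ and $\mathcal{E}=\{2n+1,\dots,4n\}$. Then $\mathbb{I}(E,6)$ is the only decomposable tensor in $\mathbb{I}(E,6)\bmod\mathcal{W}_E$, and $\mathbb{I}(\mathcal{E},6)$ is the only decomposable tensor in $\mathbb{I}(\mathcal{E},6)\bmod\mathcal{W}_{\mathcal{E}}$.
   Context: All tensors are real; decomposable means of the form $v_1\otimes\cdots\otimes v_6$. $\mathbb{I}(E,6)\in(\mathbb{R}^E)^{\otimes6}$ is the all-ones tensor, similarly $\mathbb{I}(\mathcal{E},6)$. $\mathcal{W}_E$ (resp. $\mathcal{W}_{\mathcal{E}}$) is the set of restrictions of the tensors in $\mathcal{W}$ to indices in $E$ (resp. $\mathcal{E}$). For $\mathcal{C}\in(\mathbb{R}^I)^{\otimes d}$ and a finite $\mathcal{V}\subset(\mathbb{R}^I)^{\otimes(d-1)}$, $\mathcal{C}\bmod\mathcal{V}$ is the set of tensors with entries $\mathcal{C}(k_1|\dots|k_d)+\sum_{j=1}^dM_j^{(k_j)}(k_1|\dots|\widehat{k_j}|\dots|k_d)$ with arbitrary $M_j^{(k_j)}\in\operatorname{Span}\mathcal{V}$ chosen independently for each $j$ and each $k_j\in I$. The set $\mathcal{W}$: for $i\in\{1,\dots,n\}$ let $\alpha_i\in\mathbb{R}^{2n}$ have entries $1$ at positions $2i-1,2i$ and $0$ elsewhere; $(a|b)\in\mathbb{R}^{4n}$ is concatenation.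 With $1\le i_1<i_2<i_3<i_4\le n$ and $1\le k_1<k_2\le n$ ranging over all choices, let $U$ be the set of vectors of the 16 types: $(\alpha_{i_1}+\alpha_{i_2}+\alpha_{i_3}+\alpha_{i_4}|0)$, $(\alpha_{i_1}+\alpha_{i_2}+\alpha_{i_3}|0)$, $(\alpha_{i_1}+\alpha_{i_2}|0)$, $(\alpha_{i_1}|0)$, $(\alpha_{i_1}+\alpha_{i_2}+\alpha_{i_3}+\alpha_{i_4}|\alpha_{k_1})$, $(\alpha_{i_1}+\alpha_{i_2}|\tfrac{(n-2)^2}{(n-3)(n-1)}\alpha_{k_1})$, $(\alpha_{i_1}|\tfrac{n-2}{n-3}\alpha_{k_1})$, $(\alpha_{i_1}|\tfrac{n-1}{n-4}\alpha_{k_1})$, $(\alpha_{i_1}+\alpha_{i_2}+\alpha_{i_3}|\alpha_{k_1}+\alpha_{k_2})$, $(\alpha_{i_1}+\alpha_{i_2}|\tfrac{n-2}{n-3}(\alpha_{k_1}+\alpha_{k_2}))$, $(\alpha_{i_1}+\alpha_{i_2}|\tfrac{n-2}{n-4}\alpha_{k_1})$, $(0|\alpha_{k_1})$, $(\alpha_{i_1}+\alpha_{i_2}+\alpha_{i_3}|\tfrac{n-3}{n-4}\alpha_{k_1})$, $(\alpha_{i_1}+\alpha_{i_2}+\alpha_{i_3}|\tfrac{n-2}{n-1}\alpha_{k_1})$, $(\alpha_{i_1}|\tfrac{n-1}{n-3}(\alpha_{k_1}+\alpha_{k_2}))$, $(0|\alpha_{k_1}+\alpha_{k_2})$ (types with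 only $i_1$ or only $k_1$ omit the other indices; $k_1$ alone ranges over $\{1,\dots,n\}$). Let $\pi(a_1,\dots,a_{2n},b_1,\dots,b_{2n})=(b_2,\dots,b_{2n},b_1,a_2,\dots,a_{2n},a_1)$. Set $\mathcal{W}_1=\{u^{\otimes5}:u\in U\}$, $\mathcal{W}_2=\{(\pi u)^{\otimes5}:u\in U\}$, $\mathcal{W}=\mathcal{W}_1\cup\mathcal{W}_2$. *)

theory Defs
  imports Complex_Main
begin

text \<open>Vectors in R^m are functions nat \<Rightarrow> real, meaningful on positions 1..m.
Tensors of order d over an index set I are functions nat list \<Rightarrow> real, meaningful on
lists of length d with all entries in I (the domain tdom I d).\<close>

definition tdom :: "nat set \<Rightarrow> nat \<Rightarrow> nat list set" where
  "tdom I d = {ks. length ks = d \<and> set ks \<subseteq> I}"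

definition tpow :: "(nat \<Rightarrow> real) \<Rightarrow> nat list \<Rightarrow> real" where
  "tpow u ks = prod_list (map u ks)"

definition ones_tensor :: "nat list \<Rightarrow> real" where
  "ones_tensor ks = 1"

definition decomposable :: "nat set \<Rightarrow> nat \<Rightarrow> (nat list \<Rightarrow> real) \<Rightarrow> bool" where
  "decomposable I d T \<longleftrightarrow>
     (\<exists>v :: nat \<Rightarrow> nat \<Rightarrow> real. \<forall>ks\<in>tdom I d. T ks = (\<Prod>j<d. v j (ks ! j)))"

definition in_span_on :: "(nat list \<Rightarrow> real) set \<Rightarrow> nat set \<Rightarrow> nat \<Rightarrow> (nat list \<Rightarrow> real) \<Rightarrow> bool" where
  "in_span_on V I e M \<longleftrightarrow>
     (\<exists>c :: (nat list \<Rightarrow> real) \<Rightarrow> real. \<forall>ks\<in>tdom I e. M ks = (\<Sum>v\<in>V. c v * v ks))"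

definition remove_at :: "nat \<Rightarrow> nat list \<Rightarrow> nat list" where
  "remove_at j ks = take j ks @ drop (Suc j) ks"

definition mod_set :: "(nat list \<Rightarrow> real) \<Rightarrow> (nat list \<Rightarrow> real) set \<Rightarrow> nat set \<Rightarrow> nat
                       \<Rightarrow> (nat list \<Rightarrow> real) set" where
  "mod_set C V I d = {T. \<exists>M :: nat \<Rightarrow> nat \<Rightarrow> nat list \<Rightarrow> real.
       (\<forall>j<d. \<forall>k\<in>I. in_span_on V I (d - 1) (M j k)) \<and>
       (\<forall>ks\<in>tdom I d. T ks = C ks + (\<Sum>j<d. M j (ks ! j) (remove_at j ks)))}"

definition only_decomposable :: "(nat list \<Rightarrow> real) \<Rightarrow> (nat list \<Rightarrow> real) set \<Rightarrow> nat set \<Rightarrow> nat \<Rightarrow> bool" where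
  "only_decomposable C V I d \<longleftrightarrow>
     C \<in> mod_set C V I d \<and> decomposable I d C \<and>
     (\<forall>T\<in>mod_set C V I d. decomposable I d T \<longrightarrow> (\<forall>ks\<in>tdom I d. T ks = C ks))"

definition alpha :: "nat \<Rightarrow> nat \<Rightarrow> real" where
  "alpha i p = (if p = 2*i - 1 \<or> p = 2*i then 1 else 0)"

definition asum :: "nat set \<Rightarrow> nat \<Rightarrow> real" where
  "asum A p = (\<Sum>i\<in>A. alpha i p)"

definition vcat :: "nat \<Rightarrow> (nat \<Rightarrow> real) \<Rightarrow> (nat \<Rightarrow> real) \<Rightarrow> nat \<Rightarrow> real" where
  "vcat n a b p = (if p \<le> 2*n then a p else b (p - 2*n))"

definition utype :: "nat \<Rightarrow> nat \<Rightarrow> nat \<Rightarrow> real \<Rightarrow> (nat \<Rightarrow> real) set" where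
  "utype n a b c = {vcat n (asum A) (\<lambda>p. c * asum K p) | A K.
       A \<subseteq> {1..n} \<and> card A = a \<and> K \<subseteq> {1..n} \<and> card K = b}"

definition Uset :: "nat \<Rightarrow> (nat \<Rightarrow> real) set" where
  "Uset n = (let r = real n in
      utype n 4 0 1 \<union> utype n 3 0 1 \<union> utype n 2 0 1 \<union> utype n 1 0 1 \<union>
      utype n 4 1 1 \<union>
      utype n 2 1 ((r-2)^2 / ((r-3)*(r-1))) \<union>
      utype n 1 1 ((r-2)/(r-3)) \<union>
      utype n 1 1 ((r-1)/(r-4)) \<union>
      utype n 3 2 1 \<union>
      utype n 2 2 ((r-2)/(r-3)) \<union>
      utype n 2 1 ((r-2)/(r-4)) \<union>
      utype n 0 1 1 \<union>
      utype n 3 1 ((r-3)/(r-4)) \<union>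
      utype n 3 1 ((r-2)/(r-1)) \<union>
      utype n 1 2 ((r-1)/(r-3)) \<union>
      utype n 0 2 1)"

text \<open>pi(a_1..a_{2n}, b_1..b_{2n}) = (b_2,...,b_{2n},b_1,a_2,...,a_{2n},a_1), with
  a_p = w p and b_p = w (2n+p).\<close>
definition piv :: "nat \<Rightarrow> (nat \<Rightarrow> real) \<Rightarrow> nat \<Rightarrow> real" where
  "piv n w q = (if q < 2*n then w (2*n + q + 1)
                else if q = 2*n then w (2*n + 1)
                else if q < 4*n then w (q - 2*n + 1)
                else w 1)"

definition Wset :: "nat \<Rightarrow> (nat list \<Rightarrow> real) set" where
  "Wset n = (tpow ` Uset n) \<union> ((\<lambda>u. tpow (piv n u)) ` Uset n)"

end

theory Submission
  imports Defs "HOL-Library.Multiset"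
begin

text \<open>Index lists whose entries lie in pairwise different pairs \<open>{2i-1, 2i}\<close>, both for the
  pairing seen by the vectors of \<open>U\<close> and for the cyclically shifted pairing seen by their
  images under \<open>\<pi>\<close>, are annihilated (after deleting any one entry) by every element of
  \<open>\<W>\<close>: a product of five entries of \<open>u\<close> needs five distinct pairs in the support of \<open>u\<close>,
  but on either half of \<open>\<real>\<^sup>4\<^sup>n\<close> the support meets at most four of them.
  Hence a tensor \<open>T\<close> in \<open>\<I> mod \<W>\<close> equals 1 on such lists. If moreover
  \<open>T = v\<^sub>1 \<otimes> \<dots> \<otimes> v\<^sub>6\<close>, two such lists differing in one coordinate by a unit step force
  \<open>v\<^sub>i(x) = v\<^sub>i(x+1)\<close>; since \<open>n \<ge> 7\<close> leaves five pairs untouched by any given unit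
  step, every unit step is realised, so every \<open>v\<^sub>i\<close> is constant and \<open>T = \<I>\<close>.\<close>

lemma tdom_nth: "ks \<in> tdom I d \<Longrightarrow> j < d \<Longrightarrow> ks ! j \<in> I"
  unfolding tdom_def using nth_mem by blast

lemma length_remove_at: "j < length ks \<Longrightarrow> length (remove_at j ks) = length ks - 1"
  unfolding remove_at_def by simp

lemma tdom_remove_at:
  assumes "ks \<in> tdom I d" "j < d"
  shows "remove_at j ks \<in> tdom I (d - 1)"
proof -
  have "set (remove_at j ks) \<subseteq> set ks"
    unfolding remove_at_def using set_take_subset set_drop_subset by fastforce
  then show ?thesis
    using assms length_remove_at[of j ks] unfolding tdom_def by auto
qed

lemma distinct_map_remove_at:
  assumes "distinct (map f ks)"
  shows "distinct (map f (remove_at j ks))"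
proof -
  have "map f (remove_at j ks) = take j (map f ks) @ drop (Suc j) (map f ks)"
    unfolding remove_at_def by (simp add: take_map drop_map)
  moreover have "set (take j (map f ks)) \<inter> set (drop (Suc j) (map f ks)) = {}"
    using set_take_disj_set_drop_if_distinct[OF assms, of j "Suc j"] by simp
  ultimately show ?thesis using assms by (simp add: distinct_take distinct_drop)
qed

lemma distinct_map_insert_at:
  "distinct (map f (take i l @ z # drop i l)) \<longleftrightarrow> distinct (map f (z # l))"
proof (rule mset_eq_imp_distinct_iff)
  have "mset l = mset (take i l) + mset (drop i l)"
    by (metis append_take_drop_id mset_append)
  then have "mset (take i l @ z # drop i l) = mset (z # l)" by simp
  then show "mset (map f (take i l @ z # drop i l)) = mset (map f (z # l))"
    by (simp only: mset_map)
qed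

definition admits_unit_steps :: "nat list set \<Rightarrow> nat \<Rightarrow> nat \<Rightarrow> nat \<Rightarrow> bool" where
  "admits_unit_steps G lo hi d \<longleftrightarrow>
     (\<forall>i<d. \<forall>x. lo \<le> x \<and> x < hi \<longrightarrow> (\<exists>ks\<in>G. ks ! i = x \<and> ks[i := x + 1] \<in> G))"

lemma mod_set_eq_if_annihilated:
  assumes T: "T \<in> mod_set C V I d" and ks: "ks \<in> tdom I d"
    and vanish: "\<And>j w. j < d \<Longrightarrow> w \<in> V \<Longrightarrow> w (remove_at j ks) = 0"
  shows "T ks = C ks"
proof -
  obtain M where span: "\<forall>j<d. \<forall>k\<in>I. in_span_on V I (d - 1) (M j k)"
    and TM: "\<forall>ks\<in>tdom I d. T ks = C ks + (\<Sum>j<d. M j (ks ! j) (remove_at j ks))"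
    using T unfolding mod_set_def by auto
  have "M j (ks ! j) (remove_at j ks) = 0" if j: "j < d" for j
  proof -
    obtain c where c: "\<forall>xs\<in>tdom I (d - 1). M j (ks ! j) xs = (\<Sum>w\<in>V. c w * w xs)"
      using span j tdom_nth[OF ks j] unfolding in_span_on_def by blast
    then have "M j (ks ! j) (remove_at j ks) = (\<Sum>w\<in>V. c w * w (remove_at j ks))"
      using tdom_remove_at[OF ks j] by blast
    also have "\<dots> = 0" using vanish[OF j] by (intro sum.neutral) simp
    finally show ?thesis .
  qed
  then show ?thesis using TM ks by simp
qed

lemma prod_eq_one_if_unit_steps:
  fixes v :: "nat \<Rightarrow> nat \<Rightarrow> real"
  assumes G: "G \<subseteq> tdom {lo..hi} d" "G \<noteq> {}" and steps: "admits_unit_steps G lo hi d"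
    and one: "\<And>ks. ks \<in> G \<Longrightarrow> (\<Prod>j<d. v j (ks ! j)) = 1"
    and ks: "ks \<in> tdom {lo..hi} d"
  shows "(\<Prod>j<d. v j (ks ! j)) = 1"
proof -
  have split: "(\<Prod>j<d. v j (ks ! j)) = v i (ks ! i) * (\<Prod>j\<in>{..<d} - {i}. v j (ks ! j))"
    if "i < d" for ks i using that by (simp add: prod.remove)
  have step: "v i x = v i (x + 1)" if i: "i < d" and x: "lo \<le> x" "x < hi" for i x
  proof -
    obtain ks where ks: "ks \<in> G" "ks ! i = x" "ks[i := x + 1] \<in> G"
      using steps i x unfolding admits_unit_steps_def by blast
    let ?rest = "\<Prod>j\<in>{..<d} - {i}. v j (ks ! j)"
    have "(\<Prod>j\<in>{..<d} - {i}. v j (ks[i := x + 1] ! j)) = ?rest"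
      by (rule prod.cong) auto
    moreover have "length ks = d" using ks(1) G(1) unfolding tdom_def by auto
    ultimately have "v i (x + 1) * ?rest = 1"
      using one[OF ks(3)] split[OF i, of "ks[i := x + 1]"] i by simp
    moreover have "v i x * ?rest = 1" using one[OF ks(1)] split[OF i, of ks] ks(2) by simp
    ultimately show ?thesis by (metis mult_cancel_right mult_zero_left zero_neq_one)
  qed
  have const: "v i x = v i lo" if i: "i < d" and x: "x \<in> {lo..hi}" for i x
  proof -
    have "v i (lo + k) = v i lo" if "lo + k \<le> hi" for k
      using that by (induction k) (auto simp: step[OF i])
    then show ?thesis using x by (metis atLeastAtMost_iff le_add_diff_inverse)
  qed
  have prod_lo: "(\<Prod>j<d. v j (ks ! j)) = (\<Prod>j<d. v j lo)" if "ks \<in> tdom {lo..hi} d" for ks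
    using const tdom_nth[OF that] by (intro prod.cong) auto
  obtain g where "g \<in> G" using G(2) by blast
  then have "(\<Prod>j<d. v j lo) = 1" using one prod_lo G(1) by force
  then show ?thesis using prod_lo[OF ks] by simp
qed

lemma only_decomposable_onesI:
  assumes G: "G \<subseteq> tdom {lo..hi} d" "G \<noteq> {}" and steps: "admits_unit_steps G lo hi d"
    and vanish: "\<And>ks j w. ks \<in> G \<Longrightarrow> j < d \<Longrightarrow> w \<in> V \<Longrightarrow> w (remove_at j ks) = 0"
  shows "only_decomposable ones_tensor V {lo..hi} d"
proof -
  have "in_span_on V {lo..hi} (d - 1) (\<lambda>_. 0)"
    unfolding in_span_on_def by (rule exI[of _ "\<lambda>_. 0"]) simp
  then have "ones_tensor \<in> mod_set ones_tensor V {lo..hi} d"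
    unfolding mod_set_def by (intro CollectI exI[of _ "\<lambda>_ _ _. 0"]) simp
  moreover have "decomposable {lo..hi} d ones_tensor"
    unfolding decomposable_def ones_tensor_def by (rule exI[of _ "\<lambda>_ _. 1"]) simp
  moreover have "T ks = ones_tensor ks"
    if T: "T \<in> mod_set ones_tensor V {lo..hi} d" and "decomposable {lo..hi} d T"
      and ks: "ks \<in> tdom {lo..hi} d" for T ks
  proof -
    obtain v where v: "\<forall>ks\<in>tdom {lo..hi} d. T ks = (\<Prod>j<d. v j (ks ! j))"
      using \<open>decomposable {lo..hi} d T\<close> unfolding decomposable_def by auto
    have "(\<Prod>j<d. v j (ks ! j)) = 1" if "ks \<in> G" for ks
      using mod_set_eq_if_annihilated[OF T, of ks] vanish[OF that] v G(1) that
      unfolding ones_tensor_def by auto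
    then show ?thesis
      using prod_eq_one_if_unit_steps[OF G steps _ ks] v ks unfolding ones_tensor_def by simp
  qed
  ultimately show ?thesis unfolding only_decomposable_def by blast
qed

definition block :: "nat \<Rightarrow> nat" where
  "block p = (p + 1) div 2"

text \<open>On position \<open>p\<close> of a half, \<open>\<pi> u\<close> reads position \<open>p + 1\<close> (cyclically) of the other half.\<close>
definition shifted_block :: "nat \<Rightarrow> nat \<Rightarrow> nat" where
  "shifted_block n p = block (if p < 2 * n then p + 1 else 1)"

lemma asum_nonzero_imp_block:
  assumes "A \<subseteq> {1..n}" "asum A p \<noteq> 0"
  shows "block p \<in> A"
proof -
  obtain i where "i \<in> A" "alpha i p \<noteq> 0"
    using assms(2) unfolding asum_def by (metis (mono_tags, lifting) sum.neutral)
  then show ?thesis using assms(1) unfolding alpha_def block_def by (auto split: if_splits)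
qed

lemma utype_subset:
  assumes "a \<le> 4" "b \<le> 2"
  shows "utype n a b c \<subseteq> {vcat n (asum A) (\<lambda>p. c * asum K p) | c A K.
           A \<subseteq> {1..n} \<and> card A \<le> 4 \<and> K \<subseteq> {1..n} \<and> card K \<le> 2}"
  using assms unfolding utype_def by blast

lemma Uset_elim:
  assumes "u \<in> Uset n"
  obtains c A K where "A \<subseteq> {1..n}" "card A \<le> 4" "K \<subseteq> {1..n}" "card K \<le> 2"
    "u = vcat n (asum A) (\<lambda>p. c * asum K p)"
proof -
  have "Uset n \<subseteq> {vcat n (asum A) (\<lambda>p. c * asum K p) | c A K.
      A \<subseteq> {1..n} \<and> card A \<le> 4 \<and> K \<subseteq> {1..n} \<and> card K \<le> 2}"
    unfolding Uset_def Let_def by (intro Un_least utype_subset) simp_all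
  then show ?thesis using assms that by blast
qed
lemma Uset_block_support:
  assumes "u \<in> Uset n" "off = 0 \<or> off = 2 * n"
  obtains B where "finite B" "card B \<le> 4"
    "\<And>x. off < x \<Longrightarrow> x \<le> off + 2 * n \<Longrightarrow> u x \<noteq> 0 \<Longrightarrow> block (x - off) \<in> B"
proof -
  obtain c A K where A: "A \<subseteq> {1..n}" "card A \<le> 4" and K: "K \<subseteq> {1..n}" "card K \<le> 2"
    and u: "u = vcat n (asum A) (\<lambda>p. c * asum K p)"
    using Uset_elim[OF assms(1)] .
  show ?thesis
  proof (cases "off = 0")
    case True
    have "block x \<in> A" if "x \<le> 2 * n" "u x \<noteq> 0" for x
      using that asum_nonzero_imp_block[OF A(1), of x] by (simp add: u vcat_def)
    with True A show ?thesis using finite_subset[OF A(1)] by (intro that[of A]) auto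
  next
    case False
    have "block (x - 2 * n) \<in> K" if "2 * n < x" "u x \<noteq> 0" for x
      using that asum_nonzero_imp_block[OF K(1), of "x - 2 * n"] by (simp add: u vcat_def)
    with False assms(2) K show ?thesis using finite_subset[OF K(1)] by (intro that[of K]) auto
  qed
qed

lemma piv_Uset_shifted_block_support:
  assumes "u \<in> Uset n" "off = 0 \<or> off = 2 * n"
  obtains B where "finite B" "card B \<le> 4"
    "\<And>x. off < x \<Longrightarrow> x \<le> off + 2 * n \<Longrightarrow> piv n u x \<noteq> 0 \<Longrightarrow> shifted_block n (x - off) \<in> B"
proof -
  obtain c A K where A: "A \<subseteq> {1..n}" "card A \<le> 4" and K: "K \<subseteq> {1..n}" "card K \<le> 2"
    and u: "u = vcat n (asum A) (\<lambda>p. c * asum K p)"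
    using Uset_elim[OF assms(1)] .
  let ?next = "\<lambda>p. if p < 2 * n then p + 1 else 1"
  show ?thesis
  proof (cases "off = 0")
    case True
    have "shifted_block n x \<in> K" if "0 < x" "x \<le> 2 * n" "piv n u x \<noteq> 0" for x
    proof -
      have "piv n u x = c * asum K (?next x)" using that(1,2) unfolding piv_def u vcat_def by auto
      then show ?thesis
        using that(3) asum_nonzero_imp_block[OF K(1)] unfolding shifted_block_def by auto
    qed
    with True K show ?thesis using finite_subset[OF K(1)] by (intro that[of K]) auto
  next
    case False
    have "shifted_block n (x - 2 * n) \<in> A" if "2 * n < x" "x \<le> 4 * n" "piv n u x \<noteq> 0" for x
    proof -
      have "piv n u x = asum A (?next (x - 2 * n))" using that(1,2) unfolding piv_def u vcat_def by auto
      then show ?thesis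
        using that(3) asum_nonzero_imp_block[OF A(1)] unfolding shifted_block_def by auto
    qed
    with False assms(2) A show ?thesis using finite_subset[OF A(1)] by (intro that[of A]) auto
  qed
qed

lemma tpow_eq_0_if_few_supporting_classes:
  assumes "finite B" "card B < length xs" "distinct (map f xs)"
    and "\<And>x. x \<in> set xs \<Longrightarrow> u x \<noteq> 0 \<Longrightarrow> f x \<in> B"
  shows "tpow u xs = 0"
proof (rule ccontr)
  assume "tpow u xs \<noteq> 0"
  then have "\<forall>x\<in>set xs. u x \<noteq> 0" by (auto simp: tpow_def prod_list_zero_iff)
  then have "set (map f xs) \<subseteq> B" using assms(4) by auto
  then have "card (set (map f xs)) \<le> card B" using card_mono[OF assms(1)] by blast
  moreover have "card (set (map f xs)) = length xs" using distinct_card[OF assms(3)] by simp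
  ultimately show False using assms(2) by simp
qed

definition block_transversals :: "nat \<Rightarrow> nat \<Rightarrow> nat \<Rightarrow> nat list set" where
  "block_transversals n off d = {ks \<in> tdom {off + 1..off + 2 * n} d.
     distinct (map (\<lambda>x. block (x - off)) ks) \<and> distinct (map (\<lambda>x. shifted_block n (x - off)) ks)}"

lemma Wset_vanishes_on_block_transversals:
  assumes "xs \<in> block_transversals n off d" "4 < d" "off = 0 \<or> off = 2 * n" "w \<in> Wset n"
  shows "w xs = 0"
proof -
  have xs: "length xs = d" "set xs \<subseteq> {off + 1..off + 2 * n}"
    using assms(1) unfolding block_transversals_def tdom_def by auto
  obtain u where u: "u \<in> Uset n" and "w = tpow u \<or> w = tpow (piv n u)"
    using assms(4) unfolding Wset_def by auto
  from this(2) show ?thesis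
  proof
    assume "w = tpow u"
    obtain B where "finite B" "card B \<le> 4"
      "\<And>x. off < x \<Longrightarrow> x \<le> off + 2 * n \<Longrightarrow> u x \<noteq> 0 \<Longrightarrow> block (x - off) \<in> B"
      using Uset_block_support[OF u assms(3)] by blast
    moreover have "distinct (map (\<lambda>x. block (x - off)) xs)"
      using assms(1) unfolding block_transversals_def by blast
    ultimately have "tpow u xs = 0"
      using xs assms(2) by (intro tpow_eq_0_if_few_supporting_classes[of B]) force+
    then show ?thesis using \<open>w = tpow u\<close> by simp
  next
    assume "w = tpow (piv n u)"
    obtain B where "finite B" "card B \<le> 4"
      "\<And>x. off < x \<Longrightarrow> x \<le> off + 2 * n \<Longrightarrow> piv n u x \<noteq> 0 \<Longrightarrow> shifted_block n (x - off) \<in> B"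
      using piv_Uset_shifted_block_support[OF u assms(3)] by blast
    moreover have "distinct (map (\<lambda>x. shifted_block n (x - off)) xs)"
      using assms(1) unfolding block_transversals_def by blast
    ultimately have "tpow (piv n u) xs = 0"
      using xs assms(2) by (intro tpow_eq_0_if_few_supporting_classes[of B]) force+
    then show ?thesis using \<open>w = tpow (piv n u)\<close> by simp
  qed
qed

lemma remove_at_block_transversals:
  assumes "ks \<in> block_transversals n off d" "j < d"
  shows "remove_at j ks \<in> block_transversals n off (d - 1)"
  using assms tdom_remove_at distinct_map_remove_at unfolding block_transversals_def by blast

lemma blocks_of_unit_step:
  assumes "1 \<le> r" "r < 2 * n"
  shows "{block r, shifted_block n r, block (r + 1), shifted_block n (r + 1)}
           \<subseteq> {block r, shifted_block n (r + 1)}"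
proof (cases "even r")
  case True
  then obtain m where "r = 2 * m" by blast
  with assms show ?thesis unfolding block_def shifted_block_def by simp
next
  case False
  then obtain m where "r = 2 * m + 1" using oddE by blast
  with assms show ?thesis unfolding block_def shifted_block_def by simp
qed

lemma block_transversals_admit_unit_steps:
  assumes "d < n"
  shows "admits_unit_steps (block_transversals n off d) (off + 1) (off + 2 * n) d"
  unfolding admits_unit_steps_def
proof (intro allI impI)
  fix i x assume i: "i < d" and x: "off + 1 \<le> x \<and> x < off + 2 * n"
  define B where "B = {block (x - off), shifted_block n (x - off + 1)}"
  have B: "block (x - off) \<in> B" "shifted_block n (x - off) \<in> B"
    "block (x + 1 - off) \<in> B" "shifted_block n (x + 1 - off) \<in> B"
    using blocks_of_unit_step[of "x - off" n] x unfolding B_def by (auto simp: Suc_diff_le)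
  have "card {1..n} - card B \<le> card ({1..n} - B)"
    by (rule diff_card_le_card_Diff) (simp add: B_def)
  moreover have "card B \<le> 2" unfolding B_def by (simp add: card_insert_le_m1)
  ultimately have "d - 1 \<le> card ({1..n} - B)" using assms by simp
  then obtain F where F: "F \<subseteq> {1..n} - B" "card F = d - 1"
    using obtain_subset_with_card_n by metis
  text \<open>Positions \<open>2j - 1\<close> lie in pair \<open>j\<close> for both pairings.\<close>
  define L where "L = map (\<lambda>j. off + 2 * j - 1) (sorted_list_of_set F)"
  have F_fin: "finite F" using F(1) finite_subset by blast
  have "block (2 * j - 1) = j" "shifted_block n (2 * j - 1) = j" if "j \<in> F" for j
    using that F(1) by (cases j; auto simp: block_def shifted_block_def)+
  then have L_blocks: "map (\<lambda>y. block (y - off)) L = sorted_list_of_set F"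
    "map (\<lambda>y. shifted_block n (y - off)) L = sorted_list_of_set F"
    using F(1) unfolding L_def by (auto intro!: map_idI simp: F_fin)
  let ?ins = "\<lambda>z. take i L @ z # drop i L"
  have ins: "?ins z \<in> block_transversals n off d"
    if z: "z \<in> {off + 1..off + 2 * n}" "block (z - off) \<in> B" "shifted_block n (z - off) \<in> B" for z
  proof -
    have "set L \<subseteq> {off + 1..off + 2 * n}"
      using F(1) F_fin unfolding L_def by (force simp: subset_iff)
    then have "set (?ins z) \<subseteq> {off + 1..off + 2 * n}"
      using z(1) set_take_subset[of i L] set_drop_subset[of i L] by auto
    moreover have "length (?ins z) = d" using i F unfolding L_def by simp
    moreover have "distinct (map f (?ins z))" if "map f L = sorted_list_of_set F" "f z \<in> B" for f
      unfolding distinct_map_insert_at using that F(1) F_fin by auto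
    ultimately show ?thesis
      using L_blocks z unfolding block_transversals_def tdom_def by blast
  qed
  have "length L = d - 1" using F unfolding L_def by simp
  then have at_i: "?ins x ! i = x" and step: "(?ins x)[i := x + 1] = ?ins (x + 1)"
    using i by (simp_all add: nth_append list_update_append)
  have "?ins x \<in> block_transversals n off d" "?ins (x + 1) \<in> block_transversals n off d"
    using ins x B by simp_all
  with at_i step
  show "\<exists>ks\<in>block_transversals n off d. ks ! i = x \<and> ks[i := x + 1] \<in> block_transversals n off d"
    by (intro bexI[of _ "?ins x"] conjI) argo+
qed

theorem only_decomposable_ones_on_half:
  assumes "6 \<le> d" "d < n" "off = 0 \<or> off = 2 * n"
  shows "only_decomposable ones_tensor (Wset n) {off + 1..off + 2 * n} d"
proof (rule only_decomposable_onesI)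
  let ?G = "block_transversals n off d"
  show "?G \<subseteq> tdom {off + 1..off + 2 * n} d" unfolding block_transversals_def by auto
  have steps: "admits_unit_steps ?G (off + 1) (off + 2 * n) d"
    using block_transversals_admit_unit_steps[OF assms(2)] .
  then show "?G \<noteq> {}" using assms unfolding admits_unit_steps_def by fastforce
  show "admits_unit_steps ?G (off + 1) (off + 2 * n) d" by (fact steps)
  show "w (remove_at j ks) = 0" if "ks \<in> ?G" "j < d" "w \<in> Wset n" for ks j w
    using Wset_vanishes_on_block_transversals[OF remove_at_block_transversals[OF that(1,2)] _ assms(3)
        that(3)] assms(1) by simp
qed

theorem proposition5p4:
  fixes n :: nat
  assumes "n \<ge> 7"
  shows "only_decomposable ones_tensor (Wset n) {1..2*n} 6 \<and>
         only_decomposable ones_tensor (Wset n) {2*n+1..4*n} 6"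
proof
  show "only_decomposable ones_tensor (Wset n) {1..2*n} 6"
    using only_decomposable_ones_on_half[of 6 n 0] assms by simp
  have "{2 * n + 1..2 * n + 2 * n} = {2 * n + 1..4 * n}" by simp
  then show "only_decomposable ones_tensor (Wset n) {2*n+1..4*n} 6"
    using only_decomposable_ones_on_half[of 6 n "2 * n"] assms by simp
qed

end
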